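(* For every $n\in\mathbb N$, \[ \mathsf{HLS}_n\bigl(1,(X_C)_C\bigr)=\sum_{\varnothing\neq C_1\subsetneq C_2\subsetneq\dots\subsetneq C_\ell\subseteq[n]}\ \prod_{i=1}^\ell\frac{X_{C_i}}{1-X_{C_i}}, \] the sum including the empty chain ($\ell=0$, contributing $1$). In particular, setting all $X_C=X$, \[ \mathsf{HLS}_n(1,X)=\frac{E_n(X)}{(1-X)^n},\qquad E_n(X)=\sum_{w\in S_n}X^{\#\{i\in[n-1]:\,w(i+1)<w(i)\}}. \]
   Context: Hall–Littlewood–Schubert series: Let $[n]=\{1,\dots,n\}$. $\mathrm{SSYT}_n$ is the set of semistandard Young tableaux with entries in $[n]$ (including the empty one); a tableau is identified with its sequence of columns $(C_1,\dots,C_\ell)$, $C_j\subseteq[n]$ the set of entries of column $j$, and $T_{ij}$ is the entry in row $i$, column $j$. $T$ is reduced if its columns are pairwise distinct; $\mathrm{rSSYT}_n$ is the finite set of reduced tableaux. For cells $(i,j),(i,j+1)$ both in $T$, $\mathrm{Leg}^+_T(i,j)=C_j\cap\{T_{ij},\dots,T_{i,j+1}\}$ if $T_{i,j+1}\notin C_j$, else $\varnothing$ ($\varnothing$ if a cell is missing). $\Phi_T(Y)=\prod_{\mathrm{Leg}^+_T(i,j)\neq\varnothing}(1-Y^{\#\mathrm{Leg}^+_T(i,j)})$. For variables $\mathbf X=(X_C)_{\varnothing\ne C\subseteq[n]}$, $\mathsf{HLS}_n(Y,\mathbf X)=\sum_{T\in\mathrm{rSSYT}_n}\Phi_T(Y)\prod_{C\in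 T}\frac{X_C}{1-X_C}$; $\mathsf{HLS}_n(Y,(f_C)_C)$ denotes the substitution $X_C\mapsto f_C$. $S_n$ is the symmetric group on $[n]$. *)

theory Defs
  imports Main "HOL-Combinatorics.Permutations"
begin

text \<open>A tableau is the list of its columns C_1,...,C_l (each a set of entries).
  Rows are indexed from 0: the entry in row i of column C is the i-th smallest
  element of C.\<close>

definition entry :: "nat set \<Rightarrow> nat \<Rightarrow> nat" where
  "entry C i = sorted_list_of_set C ! i"

definition SSYT :: "nat \<Rightarrow> nat set list \<Rightarrow> bool" where
  "SSYT n T \<longleftrightarrow>
     (\<forall>C\<in>set T. C \<noteq> {} \<and> C \<subseteq> {1..n}) \<and>
     (\<forall>j. Suc j < length T \<longrightarrow>
        card (T ! Suc j) \<le> card (T ! j) \<and>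
        (\<forall>i < card (T ! Suc j). entry (T ! j) i \<le> entry (T ! Suc j) i))"

definition rSSYT :: "nat \<Rightarrow> nat set list set" where
  "rSSYT n = {T. SSYT n T \<and> distinct T}"

text \<open>Leg^+_T(i,j) for the cells (i,j),(i,j+1) (0-indexed); empty if a cell is missing.\<close>
definition LegPlus :: "nat set list \<Rightarrow> nat \<Rightarrow> nat \<Rightarrow> nat set" where
  "LegPlus T i j =
     (if Suc j < length T \<and> i < card (T ! Suc j) \<and> i < card (T ! j)
         \<and> entry (T ! Suc j) i \<notin> T ! j
      then T ! j \<inter> {entry (T ! j) i .. entry (T ! Suc j) i}
      else {})"

definition Phi :: "nat set list \<Rightarrow> 'a::comm_ring_1 \<Rightarrow> 'a" where
  "Phi T Y = (\<Prod>(i, j) \<in> {(i, j). Suc j < length T \<and> i < card (T ! Suc j) \<and> LegPlus T i j \<noteq> {}}.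
                 1 - Y ^ card (LegPlus T i j))"

definition HLS :: "nat \<Rightarrow> 'a::field \<Rightarrow> (nat set \<Rightarrow> 'a) \<Rightarrow> 'a" where
  "HLS n Y X = (\<Sum>T\<in>rSSYT n. Phi T Y * (\<Prod>C\<in>set T. X C / (1 - X C)))"

definition chains :: "nat \<Rightarrow> nat set list set" where
  "chains n = {cs. sorted_wrt (\<subset>) cs \<and> (\<forall>C\<in>set cs. C \<noteq> {} \<and> C \<subseteq> {1..n})}"

definition eulerian :: "nat \<Rightarrow> 'a::comm_ring_1 \<Rightarrow> 'a" where
  "eulerian n x = (\<Sum>w | w permutes {1..n}. x ^ card {i \<in> {1..n-1}. w (Suc i) < w i})"

end

theory Submission
  imports Defs "HOL-Library.Product_Lexorder"
begin

text \<open>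
  At \<open>Y = 1\<close> every factor \<open>1 - Y^k\<close> of \<open>\<Phi>\<^sub>T\<close> vanishes, so only reduced tableaux
  without nonempty legs contribute. These are exactly the tableaux in which each column contains
  the next one, i.e. the reversed chains \<open>\<emptyset> \<noteq> C\<^sub>1 \<subset> \<dots> \<subset> C\<^sub>\<ell> \<subseteq> [n]\<close>.

  For constant \<open>X = x\<close>, a chain is the same as a pair \<open>(w, S)\<close> of a permutation \<open>w\<close> of
  \<open>[n]\<close> and a set \<open>S \<supseteq> Des(w)\<close>, via \<open>C = w{1..s}\<close> for \<open>s \<in> S\<close>: conversely \<open>w\<close> lists
  \<open>C\<^sub>1, C\<^sub>2 - C\<^sub>1, \<dots>, [n] - C\<^sub>\<ell>\<close>, each block in increasing order, so that descents occur only
  at block boundaries. Multiplying by \<open>(1 - x)^n\<close>, the chain with \<open>|S|\<close> members contributes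
  \<open>x^|S| (1 - x)^(n - |S|)\<close>, and summing this over all \<open>S \<supseteq> Des(w)\<close> gives \<open>x^des(w)\<close>
  by the binomial theorem.
\<close>

section \<open>Reduced tableaux at Y = 1\<close>

lemma card_less_entry:
  assumes "finite A" "i < card A"
  shows "card {c\<in>A. c < entry A i} = i"
proof -
  let ?xs = "sorted_list_of_set A"
  have xs: "sorted_wrt (<) ?xs" "length ?xs = card A" "set ?xs = A"
    using assms(1) by simp_all
  have nth_less_iff: "?xs ! k < ?xs ! i \<longleftrightarrow> k < i" if "k < card A" for k
    using sorted_wrt_nth_less[OF xs(1), of k i] sorted_nth_mono[of ?xs i k] that assms(2) xs
    by (auto simp: strict_sorted_iff) (meson not_le)
  have "{c\<in>A. c < entry A i} = (!) ?xs ` {..<i}"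
  proof (intro set_eqI iffI)
    fix c assume c: "c \<in> {c\<in>A. c < entry A i}"
    then obtain k where "k < card A" "c = ?xs ! k"
      using xs by (metis in_set_conv_nth mem_Collect_eq)
    with c nth_less_iff show "c \<in> (!) ?xs ` {..<i}" by (auto simp: entry_def)
  next
    fix c assume "c \<in> (!) ?xs ` {..<i}"
    then obtain k where "k < i" "c = ?xs ! k" by auto
    with assms(2) xs nth_less_iff show "c \<in> {c\<in>A. c < entry A i}"
      by (auto simp: entry_def)
  qed
  moreover have "inj_on ((!) ?xs) {..<i}"
    using assms(2) xs by (auto simp: inj_on_def nth_eq_iff_index_eq strict_sorted_iff)
  ultimately show ?thesis by (simp add: card_image)
qed

lemma entry_in: "finite C \<Longrightarrow> i < card C \<Longrightarrow> entry C i \<in> C"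
  unfolding entry_def by (metis length_sorted_list_of_set nth_mem set_sorted_list_of_set)

lemma entry_surj: "finite C \<Longrightarrow> c \<in> C \<Longrightarrow> \<exists>i < card C. entry C i = c"
  unfolding entry_def by (metis in_set_conv_nth length_sorted_list_of_set set_sorted_list_of_set)

lemma entry_mono_subset:
  assumes A: "finite A" and BA: "B \<subseteq> A" and i: "i < card B"
  shows "entry A i \<le> entry B i"
proof (rule ccontr)
  have B: "finite B" using A BA finite_subset by blast
  assume "\<not> entry A i \<le> entry B i"
  then have "insert (entry B i) {c\<in>B. c < entry B i} \<subseteq> {c\<in>A. c < entry A i}"
    using BA entry_in[OF B i] by auto
  then have "card (insert (entry B i) {c\<in>B. c < entry B i}) \<le> card {c\<in>A. c < entry A i}"
    using A by (intro card_mono) simp_all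
  also have "\<dots> = i"
    using i card_mono[OF A BA] by (intro card_less_entry[OF A]) simp
  finally show False using B card_less_entry[OF B i] by simp
qed

lemma SSYT_column_finite: "SSYT n T \<Longrightarrow> C \<in> set T \<Longrightarrow> finite C"
  unfolding SSYT_def by (meson finite_atLeastAtMost finite_subset)

lemma Phi_at_one:
  "Phi T 1 = (if \<forall>i j. Suc j < length T \<longrightarrow> i < card (T ! Suc j) \<longrightarrow> LegPlus T i j = {}
              then 1 else 0)"
proof -
  let ?I = "{(i, j). Suc j < length T \<and> i < card (T ! Suc j) \<and> LegPlus T i j \<noteq> {}}"
  have "?I \<subseteq> (\<lambda>(j, i). (i, j)) ` (SIGMA j:{..<length T}. {..<card (T ! Suc j)})"
    by (auto simp: image_iff)
  then have "finite ?I" by (rule finite_subset) auto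
  moreover have "Phi T 1 = (\<Prod>p\<in>?I. 0)"
    unfolding Phi_def by (intro prod.cong) (auto simp: card_eq_0_iff)
  moreover have "?I = {} \<longleftrightarrow>
      (\<forall>i j. Suc j < length T \<longrightarrow> i < card (T ! Suc j) \<longrightarrow> LegPlus T i j = {})"
    by blast
  ultimately show ?thesis by (simp add: power_0_left card_eq_0_iff)
qed

lemma LegPlus_empty_iff_subset:
  assumes T: "SSYT n T" and j: "Suc j < length T"
  shows "(\<forall>i < card (T ! Suc j). LegPlus T i j = {}) \<longleftrightarrow> T ! Suc j \<subseteq> T ! j"
proof
  have fin: "finite (T ! j)" "finite (T ! Suc j)"
    using SSYT_column_finite[OF T] j by auto
  have card: "card (T ! Suc j) \<le> card (T ! j)"
    and entries: "\<forall>i < card (T ! Suc j). entry (T ! j) i \<le> entry (T ! Suc j) i"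
    using T j unfolding SSYT_def by auto
  assume legs: "\<forall>i < card (T ! Suc j). LegPlus T i j = {}"
  show "T ! Suc j \<subseteq> T ! j"
  proof
    fix c assume "c \<in> T ! Suc j"
    then obtain i where i: "i < card (T ! Suc j)" "entry (T ! Suc j) i = c"
      using entry_surj[OF fin(2)] by blast
    show "c \<in> T ! j"
    proof (rule ccontr)
      assume "c \<notin> T ! j"
      moreover have "i < card (T ! j)" using i card by simp
      ultimately have "entry (T ! j) i \<in> LegPlus T i j"
        unfolding LegPlus_def using j i entries[rule_format, OF i(1)] entry_in[OF fin(1)] by simp
      then show False using legs i by auto
    qed
  qed
next
  have "finite (T ! Suc j)" using SSYT_column_finite[OF T] j by auto
  then show "\<forall>i < card (T ! Suc j). LegPlus T i j = {}" if "T ! Suc j \<subseteq> T ! j"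
    using that entry_in unfolding LegPlus_def by auto
qed

lemma sorted_wrt_supset_distinct: "sorted_wrt (\<supset>) Cs \<Longrightarrow> distinct Cs"
  by (induction Cs) auto

lemma Phi_at_one_rSSYT:
  assumes "T \<in> rSSYT n"
  shows "Phi T 1 = (if sorted_wrt (\<supset>) T then 1 else 0)"
proof -
  have T: "SSYT n T" "distinct T" using assms by (auto simp: rSSYT_def)
  have "transp ((\<supset>) :: nat set \<Rightarrow> _)" by (auto simp: transp_def)
  then have "sorted_wrt (\<supset>) T \<longleftrightarrow> (\<forall>j. Suc j < length T \<longrightarrow> T ! Suc j \<subset> T ! j)"
    by (rule sorted_wrt_iff_nth_Suc_transp)
  also have "\<dots> \<longleftrightarrow> (\<forall>j. Suc j < length T \<longrightarrow> T ! Suc j \<subseteq> T ! j)"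
    using T(2) by (auto simp: nth_eq_iff_index_eq)
  also have "\<dots> \<longleftrightarrow> (\<forall>i j. Suc j < length T \<longrightarrow> i < card (T ! Suc j) \<longrightarrow> LegPlus T i j = {})"
    using LegPlus_empty_iff_subset[OF T(1)] by blast
  finally show ?thesis unfolding Phi_at_one by simp
qed

lemma rSSYT_decreasing_iff_rev_chain:
  "(T \<in> rSSYT n \<and> sorted_wrt (\<supset>) T) \<longleftrightarrow> rev T \<in> chains n"
proof
  assume "rev T \<in> chains n"
  then have chain: "sorted_wrt (\<supset>) T" and cols: "\<forall>C\<in>set T. C \<noteq> {} \<and> C \<subseteq> {1..n}"
    by (auto simp: chains_def sorted_wrt_rev)
  have "SSYT n T" unfolding SSYT_def
  proof (intro conjI allI impI)
    fix j assume j: "Suc j < length T"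
    have sub: "T ! Suc j \<subseteq> T ! j" using sorted_wrt_nth_less[OF chain, of j "Suc j"] j by simp
    have fin: "finite (T ! j)" using cols j by (meson Suc_lessD finite_atLeastAtMost finite_subset nth_mem)
    show "card (T ! Suc j) \<le> card (T ! j)" using sub fin by (rule card_mono[rotated])
    fix i assume "i < card (T ! Suc j)"
    then show "entry (T ! j) i \<le> entry (T ! Suc j) i" by (rule entry_mono_subset[OF fin sub])
  qed (use cols in blast)
  then show "T \<in> rSSYT n \<and> sorted_wrt (\<supset>) T"
    using chain sorted_wrt_supset_distinct by (simp add: rSSYT_def)
qed (auto simp: chains_def sorted_wrt_rev rSSYT_def SSYT_def)

lemma finite_rSSYT: "finite (rSSYT n)"
proof -
  have "rSSYT n \<subseteq> {T. set T \<subseteq> Pow {1..n} \<and> length T \<le> card (Pow {1..n})}"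
  proof
    fix T assume T: "T \<in> rSSYT n"
    then have "set T \<subseteq> Pow {1..n}" "distinct T" by (auto simp: rSSYT_def SSYT_def)
    then show "T \<in> {T. set T \<subseteq> Pow {1..n} \<and> length T \<le> card (Pow {1..n})}"
      by (metis card_mono distinct_card finite_Pow_iff finite_atLeastAtMost mem_Collect_eq)
  qed
  then show ?thesis by (rule finite_subset) (simp add: finite_lists_length_le)
qed

lemma HLS_at_one:
  "HLS n 1 X = (\<Sum>cs\<in>chains n. \<Prod>C\<in>set cs. X C / (1 - X C))"
proof -
  let ?g = "\<lambda>T. \<Prod>C\<in>set T. X C / (1 - X C)"
  have "HLS n 1 X = (\<Sum>T\<in>rSSYT n. if sorted_wrt (\<supset>) T then ?g T else 0)"
    unfolding HLS_def by (rule sum.cong) (simp_all add: Phi_at_one_rSSYT)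
  also have "\<dots> = (\<Sum>T\<in>{T\<in>rSSYT n. sorted_wrt (\<supset>) T}. ?g T)"
    by (rule sum.inter_filter[OF finite_rSSYT, symmetric])
  also have "{T\<in>rSSYT n. sorted_wrt (\<supset>) T} = rev ` chains n"
    using rSSYT_decreasing_iff_rev_chain by (auto simp: image_iff) (metis rev_rev_ident)
  also have "(\<Sum>T\<in>rev ` chains n. ?g T) = (\<Sum>cs\<in>chains n. ?g cs)"
    by (subst sum.reindex) (auto simp: inj_on_def)
  finally show ?thesis .
qed

section \<open>Ranking by an injective key\<close>

definition rank :: "('a \<Rightarrow> 'b::linorder) \<Rightarrow> 'a set \<Rightarrow> 'a \<Rightarrow> nat" where
  "rank f A a = card {b\<in>A. f b \<le> f a}"

lemma rank_le_rank_iff: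
  assumes "finite A" "inj_on f A" "a \<in> A" "b \<in> A"
  shows "rank f A a \<le> rank f A b \<longleftrightarrow> f a \<le> f b"
proof
  assume "f a \<le> f b"
  then show "rank f A a \<le> rank f A b"
    unfolding rank_def using assms(1) by (intro card_mono) auto
next
  assume "rank f A a \<le> rank f A b"
  show "f a \<le> f b"
  proof (rule ccontr)
    assume "\<not> f a \<le> f b"
    then have "{c\<in>A. f c \<le> f b} \<subset> {c\<in>A. f c \<le> f a}" using assms(3) by auto
    then have "rank f A b < rank f A a" unfolding rank_def using assms(1) by (intro psubset_card_mono) auto
    then show False using \<open>rank f A a \<le> rank f A b\<close> by simp
  qed
qed

lemma rank_bij_betw:
  assumes "finite A" "inj_on f A"
  shows "bij_betw (rank f A) A {1..card A}"
proof -
  have inj: "inj_on (rank f A) A"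
  proof (rule inj_onI)
    fix a b assume ab: "a \<in> A" "b \<in> A" and "rank f A a = rank f A b"
    then have "f a = f b"
      using rank_le_rank_iff[OF assms ab] rank_le_rank_iff[OF assms ab(2,1)] by simp
    with assms(2) ab show "a = b" by (simp add: inj_on_eq_iff)
  qed
  moreover have "rank f A ` A \<subseteq> {1..card A}"
  proof
    fix r assume "r \<in> rank f A ` A"
    then obtain a where a: "a \<in> A" "r = rank f A a" by blast
    have "a \<in> {b\<in>A. f b \<le> f a}" using a by simp
    then have "{b\<in>A. f b \<le> f a} \<noteq> {}" by blast
    then have "1 \<le> r" using a assms(1) unfolding rank_def by (simp add: Suc_le_eq card_gt_0_iff)
    moreover have "r \<le> card A" unfolding a(2) rank_def using assms(1) by (intro card_mono) auto
    ultimately show "r \<in> {1..card A}" by simp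
  qed
  moreover have "card (rank f A ` A) = card {1..card A}"
    using inj by (simp add: card_image)
  ultimately show ?thesis
    unfolding bij_betw_def by (simp add: card_subset_eq)
qed

lemma rank_initial_segment:
  assumes "finite A" "inj_on f A" "C \<subseteq> A"
    and down_closed: "\<And>a b. a \<in> C \<Longrightarrow> b \<in> A \<Longrightarrow> f b \<le> f a \<Longrightarrow> b \<in> C"
  shows "C = {a\<in>A. rank f A a \<le> card C}"
proof -
  have fin: "finite C" using assms(1,3) finite_subset by blast
  show ?thesis
  proof (intro set_eqI iffI)
    fix a assume a: "a \<in> C"
    then have "{b\<in>A. f b \<le> f a} \<subseteq> C" using down_closed by blast
    then have "rank f A a \<le> card C"
      unfolding rank_def by (rule card_mono[OF fin])
    then show "a \<in> {a\<in>A. rank f A a \<le> card C}" using a assms(3) by blast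
  next
    fix a assume a: "a \<in> {a\<in>A. rank f A a \<le> card C}"
    show "a \<in> C"
    proof (rule ccontr)
      assume "a \<notin> C"
      have "f c \<le> f a" if "c \<in> C" for c
        using down_closed[OF that, of a] a \<open>a \<notin> C\<close> by (cases "f a \<le> f c") auto
      then have "insert a C \<subseteq> {b\<in>A. f b \<le> f a}" using a assms(3) by auto
      then have "card (insert a C) \<le> rank f A a"
        unfolding rank_def using assms(1) by (intro card_mono) auto
      then show False using fin a \<open>a \<notin> C\<close> by simp
    qed
  qed
qed

lemma rank_strict_mono_enum:
  assumes g: "bij_betw g {1..n} A" and mono: "strict_mono_on {1..n} (f \<circ> g)" and j: "j \<in> {1..n}"
  shows "rank f A (g j) = j"
proof -
  have "{b\<in>A. f b \<le> f (g j)} = g ` {1..j}"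
  proof (intro set_eqI iffI)
    fix b assume b: "b \<in> {b\<in>A. f b \<le> f (g j)}"
    then obtain i where i: "i \<in> {1..n}" "b = g i"
      using g by (auto simp: bij_betw_def)
    then have "i \<le> j" using b j strict_mono_on_less_eq[OF mono i(1) j] by simp
    then show "b \<in> g ` {1..j}" using i by auto
  next
    fix b assume "b \<in> g ` {1..j}"
    then obtain i where i: "i \<in> {1..j}" "b = g i" by blast
    then have "i \<in> {1..n}" using j by auto
    then show "b \<in> {b\<in>A. f b \<le> f (g j)}"
      using i j g strict_mono_on_less_eq[OF mono _ j] by (auto simp: bij_betw_def)
  qed
  moreover have "inj_on g {1..j}"
    using g j by (auto simp: bij_betw_def intro: inj_on_subset)
  ultimately show ?thesis by (simp add: rank_def card_image)
qed

section \<open>Chains of subsets and permutations\<close>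

lemma strict_mono_by_steps:
  fixes f :: "nat \<Rightarrow> 'a::order"
  assumes "i < j" and steps: "\<And>k. i \<le> k \<Longrightarrow> k < j \<Longrightarrow> f k < f (Suc k)"
  shows "f i < f j"
  using Suc_leI[OF assms(1)]
proof (induction j rule: dec_induct)
  case base
  then show ?case using steps assms(1) by simp
next
  case (step m)
  then have "f m < f (Suc m)" using steps[of m] by simp
  with step.IH show ?case by (rule less_trans)
qed

definition descents :: "nat \<Rightarrow> (nat \<Rightarrow> nat) \<Rightarrow> nat set" where
  "descents n w = {i\<in>{1..n-1}. w (Suc i) < w i}"

definition perm_chain :: "(nat \<Rightarrow> nat) \<Rightarrow> nat set \<Rightarrow> nat set list" where
  "perm_chain w S = map (\<lambda>s. w ` {1..s}) (sorted_list_of_set S)"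

definition descent_pairs :: "nat \<Rightarrow> ((nat \<Rightarrow> nat) \<times> nat set) set" where
  "descent_pairs n = Sigma {w. w permutes {1..n}} (\<lambda>w. {S. descents n w \<subseteq> S \<and> S \<subseteq> {1..n}})"

text \<open>
  Sorting \<open>[n]\<close> by this key lists the members of a chain \<open>F\<close> block by block, each block in
  increasing order: the first component counts the members of \<open>F\<close> that do not contain \<open>a\<close>.
\<close>

definition chain_key :: "nat set set \<Rightarrow> nat \<Rightarrow> nat \<times> nat" where
  "chain_key F a = (card {C\<in>F. a \<notin> C}, a)"

lemma inj_chain_key: "inj (chain_key F)"
  by (rule injI) (simp add: chain_key_def)

lemma chain_key_down_closed:
  assumes F: "finite F" and total: "\<And>C D. C \<in> F \<Longrightarrow> D \<in> F \<Longrightarrow> C \<subseteq> D \<or> D \<subseteq> C"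
    and C: "C \<in> F" "a \<in> C" and le: "chain_key F b \<le> chain_key F a"
  shows "b \<in> C"
proof (rule ccontr)
  assume "b \<notin> C"
  have "{D\<in>F. a \<notin> D} \<subseteq> {D\<in>F. b \<notin> D}"
    using total[OF C(1)] C(2) \<open>b \<notin> C\<close> by blast
  moreover have "C \<in> {D\<in>F. b \<notin> D} - {D\<in>F. a \<notin> D}" using C \<open>b \<notin> C\<close> by simp
  ultimately have "card {D\<in>F. a \<notin> D} < card {D\<in>F. b \<notin> D}"
    using F by (intro psubset_card_mono) auto
  then show False using le by (simp add: chain_key_def)
qed

definition chain_perm :: "nat \<Rightarrow> nat set set \<Rightarrow> nat \<Rightarrow> nat" where
  "chain_perm n F j = (if j \<in> {1..n} then inv_into {1..n} (rank (chain_key F) {1..n}) j else j)"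

lemma rank_chain_key_bij: "bij_betw (rank (chain_key F) {1..n}) {1..n} {1..n}"
  using rank_bij_betw[OF finite_atLeastAtMost[of 1 n] inj_on_subset[OF inj_chain_key subset_UNIV]]
  by simp

lemma chain_perm_permutes: "chain_perm n F permutes {1..n}"
proof (rule bij_imp_permutes)
  show "bij_betw (chain_perm n F) {1..n} {1..n}"
    using bij_betw_inv_into[OF rank_chain_key_bij]
    by (rule bij_betw_cong[THEN iffD1, rotated]) (simp add: chain_perm_def)
qed (auto simp: chain_perm_def)

lemma rank_chain_perm: "j \<in> {1..n} \<Longrightarrow> rank (chain_key F) {1..n} (chain_perm n F j) = j"
  using rank_chain_key_bij[of F n] by (simp add: chain_perm_def bij_betw_def f_inv_into_f)

lemma chain_perm_image:
  assumes "k \<le> n"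
  shows "chain_perm n F ` {1..k} = {a\<in>{1..n}. rank (chain_key F) {1..n} a \<le> k}"
proof (intro set_eqI iffI)
  fix a assume "a \<in> chain_perm n F ` {1..k}"
  then obtain j where j: "j \<in> {1..k}" "a = chain_perm n F j" by blast
  then have "j \<in> {1..n}" using assms by simp
  then show "a \<in> {a\<in>{1..n}. rank (chain_key F) {1..n} a \<le> k}"
    using j rank_chain_perm permutes_in_image[OF chain_perm_permutes] by auto
next
  fix a assume a: "a \<in> {a\<in>{1..n}. rank (chain_key F) {1..n} a \<le> k}"
  have r: "rank (chain_key F) {1..n} a \<in> {1..k}"
    using a bij_betwE[OF rank_chain_key_bij] by fastforce
  moreover have "chain_perm n F (rank (chain_key F) {1..n} a) = a"
    using a r assms rank_chain_key_bij[of F n] by (auto simp: chain_perm_def bij_betw_def)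
  ultimately show "a \<in> chain_perm n F ` {1..k}" by (metis imageI)
qed

lemma sorted_wrt_psubset_total:
  "sorted_wrt (\<subset>) Cs \<Longrightarrow> C \<in> set Cs \<Longrightarrow> D \<in> set Cs \<Longrightarrow> C \<subseteq> D \<or> D \<subseteq> C"
  by (induction Cs) auto

lemma chains_member:
  "cs \<in> chains n \<Longrightarrow> C \<in> set cs \<Longrightarrow> C \<noteq> {} \<and> C \<subseteq> {1..n} \<and> finite C \<and> card C \<le> n"
  unfolding chains_def using card_mono[OF finite_atLeastAtMost, of C 1 n] by (auto intro: finite_subset)

lemma chain_member_rank:
  assumes cs: "cs \<in> chains n" and C: "C \<in> set cs"
  shows "C = {a\<in>{1..n}. rank (chain_key (set cs)) {1..n} a \<le> card C}"
proof (rule rank_initial_segment)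
  show "inj_on (chain_key (set cs)) {1..n}" by (rule inj_on_subset[OF inj_chain_key subset_UNIV])
  show "C \<subseteq> {1..n}" using chains_member[OF cs C] by simp
  have "sorted_wrt (\<subset>) cs" using cs by (simp add: chains_def)
  then show "b \<in> C" if "a \<in> C" "chain_key (set cs) b \<le> chain_key (set cs) a" for a b
    using chain_key_down_closed[OF _ _ C that] sorted_wrt_psubset_total by blast
qed simp

lemma chain_perm_segment:
  assumes cs: "cs \<in> chains n" and C: "C \<in> set cs"
  shows "chain_perm n (set cs) ` {1..card C} = C"
  using chain_perm_image chain_member_rank[OF cs C] chains_member[OF cs C] by simp

lemma descents_chain_perm:
  assumes cs: "cs \<in> chains n"
  shows "descents n (chain_perm n (set cs)) \<subseteq> card ` set cs"
proof
  let ?F = "set cs" and ?w = "chain_perm n (set cs)"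
  let ?r = "rank (chain_key ?F) {1..n}"
  fix j assume "j \<in> descents n ?w"
  then have j: "j \<in> {1..n}" "Suc j \<in> {1..n}" and desc: "?w (Suc j) < ?w j"
    by (auto simp: descents_def)
  define a where "a = ?w j"
  define b where "b = ?w (Suc j)"
  have ab: "a \<in> {1..n}" "b \<in> {1..n}"
    using j permutes_in_image[OF chain_perm_permutes] by (auto simp: a_def b_def)
  have ra: "?r a = j" and rb: "?r b = Suc j"
    using rank_chain_perm j by (auto simp: a_def b_def)
  have "\<not> chain_key ?F b \<le> chain_key ?F a"
    using rank_le_rank_iff[OF _ inj_on_subset[OF inj_chain_key[of ?F] subset_UNIV] ab(2,1)] ra rb by simp
  then have "card {D\<in>?F. a \<notin> D} < card {D\<in>?F. b \<notin> D}"
    using desc by (auto simp: chain_key_def a_def b_def)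
  then have "\<not> {D\<in>?F. b \<notin> D} \<subseteq> {D\<in>?F. a \<notin> D}"
    using card_mono[of "{D\<in>?F. a \<notin> D}" "{D\<in>?F. b \<notin> D}"] by auto
  then obtain C where C: "C \<in> ?F" "a \<in> C" "b \<notin> C" by blast
  have mem: "x \<in> C \<longleftrightarrow> x \<in> {1..n} \<and> ?r x \<le> card C" for x
    using chain_member_rank[OF cs C(1)] by (simp add: set_eq_iff)
  have "j \<le> card C" "\<not> Suc j \<le> card C"
    using mem[of a] mem[of b] C(2,3) ab ra rb by simp_all
  then have "j = card C" by simp
  then show "j \<in> card ` ?F" using C(1) by blast
qed

lemma perm_chain_chain_perm:
  assumes cs: "cs \<in> chains n"
  shows "perm_chain (chain_perm n (set cs)) (card ` set cs) = cs"
proof -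
  have "sorted_wrt (\<subset>) cs" using cs by (simp add: chains_def)
  then have "sorted_wrt (<) (map card cs)"
    unfolding sorted_wrt_map
    by (rule sorted_wrt_mono_rel[rotated]) (use chains_member[OF cs] in \<open>auto intro: psubset_card_mono\<close>)
  then have "sorted_list_of_set (card ` set cs) = map card cs"
    using distinct_card[of "map card cs"]
    by (subst sorted_list_of_set_unique[symmetric]) (auto simp: strict_sorted_iff)
  then show ?thesis
    using chain_perm_segment[OF cs] by (simp add: perm_chain_def map_idI)
qed

lemma card_image_initial_segment: "inj w \<Longrightarrow> card (w ` {1..s}) = s"
  by (simp add: card_image inj_on_subset)

lemma inj_initial_segments:
  fixes w :: "nat \<Rightarrow> 'a"
  assumes "inj w"
  shows "inj (\<lambda>s. w ` {1..s})"
proof (rule injI)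
  fix s t assume "w ` {1..s} = w ` {1..t}"
  then show "s = t"
    using card_image_initial_segment[OF assms, of s] card_image_initial_segment[OF assms, of t]
    by metis
qed

lemma set_perm_chain: "finite S \<Longrightarrow> set (perm_chain w S) = (\<lambda>s. w ` {1..s}) ` S"
  by (simp add: perm_chain_def)

lemma card_image_perm_chain:
  assumes "inj w" "finite S"
  shows "card ` set (perm_chain w S) = S"
proof -
  have "card ` set (perm_chain w S) = (\<lambda>s. card (w ` {1..s})) ` S"
    by (simp add: set_perm_chain[OF assms(2)] image_image)
  also have "\<dots> = (\<lambda>s. s) ` S"
    by (rule image_cong[OF refl card_image_initial_segment[OF assms(1)]])
  finally show ?thesis by simp
qed

lemma perm_chain_level:
  assumes w: "inj w" and S: "finite S" and j: "1 \<le> j"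
  shows "card {C\<in>set (perm_chain w S). w j \<notin> C} = card {s\<in>S. s < j}"
proof -
  have "{C\<in>set (perm_chain w S). w j \<notin> C} = (\<lambda>s. w ` {1..s}) ` {s\<in>S. w j \<notin> w ` {1..s}}"
    by (auto simp: set_perm_chain[OF S])
  also have "{s\<in>S. w j \<notin> w ` {1..s}} = {s\<in>S. s < j}"
    using j by (auto simp: inj_image_mem_iff[OF w])
  finally have "{C\<in>set (perm_chain w S). w j \<notin> C} = (\<lambda>s. w ` {1..s}) ` {s\<in>S. s < j}" .
  with inj_initial_segments[OF w] show ?thesis by (simp add: card_image inj_on_subset)
qed

lemma strict_mono_chain_key_perm:
  assumes "(w, S) \<in> descent_pairs n"
  shows "strict_mono_on {1..n} (chain_key (set (perm_chain w S)) \<circ> w)"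
proof (rule strict_mono_onI)
  have w: "w permutes {1..n}" and D: "descents n w \<subseteq> S" and S: "S \<subseteq> {1..n}"
    using assms by (auto simp: descent_pairs_def)
  have inj: "inj w" using permutes_inj[OF w] .
  have fin: "finite S" using S finite_subset by blast
  fix i j assume ij: "i \<in> {1..n}" "j \<in> {1..n}" "i < j"
  let ?lv = "\<lambda>k. card {s\<in>S. s < k}"
  have sub: "{s\<in>S. s < i} \<subseteq> {s\<in>S. s < j}" using ij by auto
  have "?lv i < ?lv j \<or> (?lv i = ?lv j \<and> w i < w j)"
  proof (cases "\<exists>s\<in>S. i \<le> s \<and> s < j")
    case True
    then obtain s where "s \<in> S" "i \<le> s" "s < j" by blast
    then have "s \<in> {s\<in>S. s < j} - {s\<in>S. s < i}" by simp
    then have "{s\<in>S. s < i} \<subset> {s\<in>S. s < j}" using sub by blast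
    then show ?thesis using fin by (simp add: psubset_card_mono)
  next
    case False
    then have "{s\<in>S. s < i} = {s\<in>S. s < j}" using ij by force
    moreover have "w i < w j"
    proof (rule strict_mono_by_steps[OF ij(3)])
      fix k assume k: "i \<le> k" "k < j"
      then have "k \<notin> descents n w" using False D by auto
      then have "\<not> w (Suc k) < w k" using k ij by (auto simp: descents_def)
      moreover have "w (Suc k) \<noteq> w k" using inj by (metis injD n_not_Suc_n)
      ultimately show "w k < w (Suc k)" by simp
    qed
    ultimately show ?thesis by simp
  qed
  then show "(chain_key (set (perm_chain w S)) \<circ> w) i < (chain_key (set (perm_chain w S)) \<circ> w) j"
    using ij perm_chain_level[OF inj fin] by (auto simp: chain_key_def)
qed

lemma chain_perm_perm_chain:
  assumes p: "(w, S) \<in> descent_pairs n"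
  shows "chain_perm n (set (perm_chain w S)) = w"
proof
  fix j
  have w: "w permutes {1..n}" using p by (simp add: descent_pairs_def)
  let ?r = "rank (chain_key (set (perm_chain w S))) {1..n}"
  show "chain_perm n (set (perm_chain w S)) j = w j"
  proof (cases "j \<in> {1..n}")
    case True
    have "?r (w j) = j"
      using rank_strict_mono_enum[OF permutes_imp_bij[OF w] strict_mono_chain_key_perm[OF p] True] .
    moreover have "w j \<in> {1..n}" using True permutes_in_image[OF w] by simp
    ultimately show ?thesis
      using True rank_chain_key_bij by (simp add: chain_perm_def bij_betw_def inv_into_f_eq)
  next
    case False
    then show ?thesis using permutes_not_in[OF w] by (auto simp: chain_perm_def)
  qed
qed

lemma perm_chain_in_chains:
  assumes "(w, S) \<in> descent_pairs n"
  shows "perm_chain w S \<in> chains n"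
proof -
  have w: "w permutes {1..n}" and S: "S \<subseteq> {1..n}"
    using assms by (auto simp: descent_pairs_def)
  have inj: "inj w" using permutes_inj[OF w] .
  have "sorted_wrt (\<subset>) (perm_chain w S)"
    unfolding perm_chain_def sorted_wrt_map
  proof (rule sorted_wrt_mono_rel[OF _ strict_sorted_list_of_set])
    fix s t :: nat assume "s < t"
    then have "w t \<in> w ` {1..t}" "w t \<notin> w ` {1..s}"
      by (simp_all add: inj_image_mem_iff[OF inj])
    moreover have "w ` {1..s} \<subseteq> w ` {1..t}" using \<open>s < t\<close> by auto
    ultimately show "w ` {1..s} \<subset> w ` {1..t}" by blast
  qed
  moreover have "C \<noteq> {} \<and> C \<subseteq> {1..n}" if C: "C \<in> set (perm_chain w S)" for C
  proof -
    have "finite S" using S finite_subset by blast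
    then obtain s where s: "s \<in> S" "C = w ` {1..s}"
      using C by (auto simp: set_perm_chain)
    then have "s \<in> {1..n}" using S by blast
    then have "C \<subseteq> w ` {1..n}" "C \<noteq> {}" using s(2) by auto
    then show ?thesis using permutes_image[OF w] by simp
  qed
  ultimately show ?thesis by (simp add: chains_def)
qed

lemma perm_chain_bij: "bij_betw (case_prod perm_chain) (descent_pairs n) (chains n)"
proof (rule bij_betw_byWitness[where f' = "\<lambda>cs. (chain_perm n (set cs), card ` set cs)"])
  show "\<forall>p\<in>descent_pairs n. (chain_perm n (set (case_prod perm_chain p)),
      card ` set (case_prod perm_chain p)) = p"
  proof
    fix p assume p: "p \<in> descent_pairs n"
    obtain w S where wS: "p = (w, S)" by fastforce
    have w: "w permutes {1..n}" and S: "S \<subseteq> {1..n}"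
      using p wS by (auto simp: descent_pairs_def)
    have "card ` set (perm_chain w S) = S"
      using card_image_perm_chain[OF permutes_inj[OF w] finite_subset[OF S]] by simp
    then show "(chain_perm n (set (case_prod perm_chain p)), card ` set (case_prod perm_chain p)) = p"
      using chain_perm_perm_chain p wS by simp
  qed
  show "\<forall>cs\<in>chains n. case_prod perm_chain (chain_perm n (set cs), card ` set cs) = cs"
    by (simp add: perm_chain_chain_perm)
  show "case_prod perm_chain ` descent_pairs n \<subseteq> chains n"
    using perm_chain_in_chains by auto
  have "(chain_perm n (set cs), card ` set cs) \<in> descent_pairs n" if "cs \<in> chains n" for cs
  proof -
    have "card ` set cs \<subseteq> {1..n}"
      using chains_member[OF that] by (auto simp: Suc_le_eq card_gt_0_iff)
    then show ?thesis
      using chain_perm_permutes descents_chain_perm[OF that] by (simp add: descent_pairs_def)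
  qed
  then show "(\<lambda>cs. (chain_perm n (set cs), card ` set cs)) ` chains n \<subseteq> descent_pairs n"
    by blast
qed

section \<open>Counting by descents\<close>

lemma sum_supersets_binomial:
  fixes x :: "'a::comm_ring_1"
  assumes R: "finite R" and D: "D \<subseteq> R"
  shows "(\<Sum>S | D \<subseteq> S \<and> S \<subseteq> R. x ^ card S * (1 - x) ^ (card R - card S)) = x ^ card D"
proof -
  let ?g = "\<lambda>a. if a \<in> D then 0 else 1 - x"
  have "x ^ card D = (\<Prod>a\<in>R. if a \<in> D then x else 1)"
    using R by (simp add: prod.If_cases Int_absorb1[OF D] Int_absorb2[OF D])
  also have "\<dots> = (\<Prod>a\<in>R. x + ?g a)" by (rule prod.cong) auto
  also have "\<dots> = (\<Sum>S\<in>Pow R. (\<Prod>a\<in>S. x) * (\<Prod>a\<in>R - S. ?g a))"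
    by (rule prod_add[OF R])
  also have "\<dots> = (\<Sum>S\<in>Pow R. if D \<subseteq> S then x ^ card S * (1 - x) ^ (card R - card S) else 0)"
  proof (rule sum.cong[OF refl])
    fix S assume S: "S \<in> Pow R"
    show "(\<Prod>a\<in>S. x) * (\<Prod>a\<in>R - S. ?g a)
        = (if D \<subseteq> S then x ^ card S * (1 - x) ^ (card R - card S) else 0)"
    proof (cases "D \<subseteq> S")
      case True
      then have "(\<Prod>a\<in>R - S. ?g a) = (\<Prod>a\<in>R - S. 1 - x)" by (intro prod.cong) auto
      then show ?thesis using True S R by (simp add: card_Diff_subset finite_subset)
    next
      case False
      then have "(\<Prod>a\<in>R - S. ?g a) = 0" using D R by (intro prod_zero) auto
      then show ?thesis using False by simp
    qed
  qed
  also have "\<dots> = (\<Sum>S | D \<subseteq> S \<and> S \<subseteq> R. x ^ card S * (1 - x) ^ (card R - card S))"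
    using R by (simp add: sum.If_cases Int_def conj_commute)
  finally show ?thesis ..
qed

lemma card_set_perm_chain:
  assumes "(w, S) \<in> descent_pairs n"
  shows "card (set (perm_chain w S)) = card S"
proof -
  have w: "inj w" and S: "finite S"
    using assms permutes_inj finite_subset by (auto simp: descent_pairs_def)
  show ?thesis
    using inj_initial_segments[OF w] by (simp add: set_perm_chain[OF S] card_image inj_on_subset)
qed

lemma sum_chains_eulerian:
  fixes x :: "'a::field"
  assumes "x \<noteq> 1"
  shows "(\<Sum>cs\<in>chains n. (x / (1 - x)) ^ card (set cs)) = eulerian n x / (1 - x) ^ n"
proof -
  have "(1 - x) ^ n * (\<Sum>cs\<in>chains n. (x / (1 - x)) ^ card (set cs))
      = (\<Sum>(w, S)\<in>descent_pairs n. (1 - x) ^ n * (x / (1 - x)) ^ card S)"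
    by (simp add: sum.reindex_bij_betw[OF perm_chain_bij, symmetric] sum_distrib_left
        case_prod_unfold card_set_perm_chain)
  also have "\<dots> = (\<Sum>(w, S)\<in>descent_pairs n. x ^ card S * (1 - x) ^ (n - card S))"
  proof (rule sum.cong[OF refl], clarify)
    fix w S assume "(w, S) \<in> descent_pairs n"
    then have "card S \<le> n" using card_mono[of "{1..n}" S] by (simp add: descent_pairs_def)
    then have "(1 - x) ^ n = (1 - x) ^ card S * (1 - x) ^ (n - card S)"
      by (simp flip: power_add)
    then show "(1 - x) ^ n * (x / (1 - x)) ^ card S = x ^ card S * (1 - x) ^ (n - card S)"
      using assms by (simp add: power_divide)
  qed
  also have "\<dots> = (\<Sum>w | w permutes {1..n}.
      \<Sum>S | descents n w \<subseteq> S \<and> S \<subseteq> {1..n}. x ^ card S * (1 - x) ^ (card {1..n} - card S))"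
    unfolding descent_pairs_def by (subst sum.Sigma) (auto simp: finite_permutations)
  also have "\<dots> = (\<Sum>w | w permutes {1..n}. x ^ card (descents n w))"
  proof (rule sum.cong[OF refl])
    fix w
    have "descents n w \<subseteq> {1..n}" by (auto simp: descents_def)
    then show "(\<Sum>S | descents n w \<subseteq> S \<and> S \<subseteq> {1..n}.
        x ^ card S * (1 - x) ^ (card {1..n} - card S)) = x ^ card (descents n w)"
      by (rule sum_supersets_binomial[OF finite_atLeastAtMost])
  qed
  also have "\<dots> = eulerian n x" by (simp add: eulerian_def descents_def)
  finally show ?thesis using assms by (simp add: field_simps)
qed

theorem mainTheorem17:
  fixes n :: nat and X :: "nat set \<Rightarrow> 'a::field" and x :: 'a
  shows "((\<forall>C. C \<noteq> {} \<and> C \<subseteq> {1..n} \<longrightarrow> X C \<noteq> 1) \<longrightarrow>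
            HLS n 1 X = (\<Sum>cs\<in>chains n. \<Prod>C\<in>set cs. X C / (1 - X C)))
       \<and> (x \<noteq> 1 \<longrightarrow> HLS n 1 (\<lambda>_. x) = eulerian n x / (1 - x) ^ n)"
proof (intro conjI impI)
  show "HLS n 1 X = (\<Sum>cs\<in>chains n. \<Prod>C\<in>set cs. X C / (1 - X C))"
    by (rule HLS_at_one)
next
  assume "x \<noteq> 1"
  then show "HLS n 1 (\<lambda>_. x) = eulerian n x / (1 - x) ^ n"
    by (simp add: HLS_at_one sum_chains_eulerian)
qed

end
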